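(* Let $C\neq\mathbb{F}_q^n$ be a $q$-ary linear code with minimum distance $d=1$ and covering radius $\rho$. Then $C$ can be obtained, up to a permutation of coordinates, by applying the $q$-repeated code construction some number of times to a linear code $D$ which has minimum distance greater than one and covering radius $\rho$. Moreover, $C$ is completely regular if and only if $D$ is completely regular.
   Context: The $q$-repeated code of $D\subseteq\mathbb{F}_q^m$ is $\{(a,x_1,\dots,x_m): a\in\mathbb{F}_q,(x_1,\dots,x_m)\in D\}\subseteq\mathbb{F}_q^{m+1}$. Covering radius $\rho=\max_{\bf v}\min_{{\bf x}\in C}d({\bf v},{\bf x})$ (Hamming distance). A code is completely regular if for every vector ${\bf x}$, with $t=d({\bf x},C)$, the number of codewords at distance $i$ from ${\bf x}$ depends only on $t$ and $i$. *)

theory Defs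
  imports Main "HOL-Combinatorics.Permutations" "HOL-Library.Extended_Nat"
begin

definition words :: "nat \<Rightarrow> 'a list set" where
  "words n = {x. length x = n}"

definition linear_code :: "nat \<Rightarrow> 'a::field list set \<Rightarrow> bool" where
  "linear_code n C \<longleftrightarrow> C \<subseteq> words n \<and> replicate n 0 \<in> C \<and>
     (\<forall>x\<in>C. \<forall>y\<in>C. map2 (+) x y \<in> C) \<and>
     (\<forall>a. \<forall>x\<in>C. map (\<lambda>u. a * u) x \<in> C)"

definition hdist :: "'a list \<Rightarrow> 'a list \<Rightarrow> nat" where
  "hdist x y = card {i. i < length x \<and> x ! i \<noteq> y ! i}"

text \<open>Minimum distance (infinite for codes with at most one codeword).\<close>
definition min_dist :: "'a list set \<Rightarrow> enat" where
  "min_dist C = Inf {enat (hdist x y) | x y. x \<in> C \<and> y \<in> C \<and> x \<noteq> y}"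

definition dist_code :: "'a list \<Rightarrow> 'a list set \<Rightarrow> nat" where
  "dist_code v C = Min (hdist v ` C)"

definition covering_radius :: "nat \<Rightarrow> 'a list set \<Rightarrow> nat" where
  "covering_radius n C = Max ((\<lambda>v. dist_code v C) ` words n)"

definition completely_regular :: "nat \<Rightarrow> 'a list set \<Rightarrow> bool" where
  "completely_regular n C \<longleftrightarrow>
     (\<forall>x\<in>words n. \<forall>y\<in>words n. dist_code x C = dist_code y C \<longrightarrow>
        (\<forall>i. card {c\<in>C. hdist x c = i} = card {c\<in>C. hdist y c = i}))"

definition rep_code :: "'a list set \<Rightarrow> 'a list set" where
  "rep_code D = {a # x | a x. x \<in> D}"

definition permute_code :: "nat \<Rightarrow> (nat \<Rightarrow> nat) \<Rightarrow> 'a list set \<Rightarrow> 'a list set" where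
  "permute_code n \<sigma> E = (\<lambda>x. map (\<lambda>i. x ! \<sigma> i) [0..<n]) ` E"

end

theory Submission
  imports Defs
begin

text \<open>A linear code with minimum distance at most one contains a unit vector e_i. Moving
  coordinate i to the front by a transposition, the code contains 1 # 0 ... 0 and is therefore the
  q-repeated code of its puncturing at the first coordinate, which is again linear; induction
  on the length splits off free coordinates until the minimum distance exceeds one.
  Both the covering radius and complete regularity survive the two operations: a coordinate
  permutation is an isometry of the Hamming space, and for the repeated code the distance from
  a # w is d(w, D), while the number of its codewords at distance i from a # w is
  N_i(w) + (q - 1) N_(i-1)(w), where N_i(w) counts codewords of D at distance i from w.
  The last relation can be inverted recursively in i, so the distance distributions of D
  determine those of its repeated code and conversely.\<close>

lemma finite_words: "finite (words n :: 'a::finite list set)"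
  using finite_lists_length_eq[of "UNIV :: 'a set" n] by (simp add: words_def)

lemma Cons_in_words_Suc [simp]: "a # w \<in> words (Suc m) \<longleftrightarrow> w \<in> words m"
  by (simp add: words_def)

lemma words_SucE:
  assumes "v \<in> words (Suc m)"
  obtains a w where "v = a # w" and "w \<in> words m"
  using assms by (cases v) (auto simp: words_def)

lemma linear_code_subset_words: "linear_code n C \<Longrightarrow> C \<subseteq> words n"
  by (simp add: linear_code_def)

lemma hdist_eq_0_iff:
  assumes "length x = length y"
  shows "hdist x y = 0 \<longleftrightarrow> x = y"
  using assms by (auto simp: hdist_def intro: nth_equalityI)

lemma hdist_Cons:
  assumes "length w = length x"
  shows "hdist (a # w) (b # x) = (if a = b then 0 else 1) + hdist w x"
proof -
  let ?B = "{i. i < length w \<and> w ! i \<noteq> x ! i}"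
  have "{i. i < length (a # w) \<and> (a # w) ! i \<noteq> (b # x) ! i} = {i. i = 0 \<and> a \<noteq> b} \<union> Suc ` ?B"
  proof (intro set_eqI iffI)
    fix i assume "i \<in> {i. i < length (a # w) \<and> (a # w) ! i \<noteq> (b # x) ! i}"
    then show "i \<in> {i. i = 0 \<and> a \<noteq> b} \<union> Suc ` ?B" by (cases i) auto
  qed auto
  moreover have "card ({i. i = 0 \<and> a \<noteq> b} \<union> Suc ` ?B) = card {i::nat. i = 0 \<and> a \<noteq> b} + card ?B"
    by (subst card_Un_disjoint) (auto simp: card_image)
  ultimately show ?thesis
    unfolding hdist_def using assms by simp
qed

section \<open>Hamming isometries\<close>

definition hamming_isometry :: "nat \<Rightarrow> ('a list \<Rightarrow> 'a list) \<Rightarrow> bool" where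
  "hamming_isometry n f \<longleftrightarrow> f ` words n = words n \<and>
     (\<forall>x\<in>words n. \<forall>y\<in>words n. hdist (f x) (f y) = hdist x y)"

lemma hamming_isometry_image: "hamming_isometry n f \<Longrightarrow> f ` words n = words n"
  by (simp add: hamming_isometry_def)

lemma hamming_isometry_hdist:
  "hamming_isometry n f \<Longrightarrow> x \<in> words n \<Longrightarrow> y \<in> words n \<Longrightarrow> hdist (f x) (f y) = hdist x y"
  by (simp add: hamming_isometry_def)

lemma hamming_isometry_inj_on:
  assumes "hamming_isometry n f"
  shows "inj_on f (words n)"
proof (rule inj_onI)
  fix x y assume xy: "x \<in> words n" "y \<in> words n" "f x = f y"
  have "hdist x y = hdist (f x) (f y)"
    using hamming_isometry_hdist[OF assms xy(1,2)] by simp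
  also have "\<dots> = 0"
    using xy(3) by (simp add: hdist_def)
  finally show "x = y" using xy by (simp add: hdist_eq_0_iff words_def)
qed

lemma dist_code_isometry:
  assumes "hamming_isometry n f" "E \<subseteq> words n" "v \<in> words n"
  shows "dist_code (f v) (f ` E) = dist_code v E"
proof -
  have "hdist (f v) ` f ` E = hdist v ` E"
    unfolding image_image
    using assms(2,3) by (intro image_cong) (auto intro: hamming_isometry_hdist[OF assms(1)])
  then show ?thesis by (simp add: dist_code_def)
qed

lemma covering_radius_isometry:
  assumes "hamming_isometry n f" "E \<subseteq> words n"
  shows "covering_radius n (f ` E) = covering_radius n E"
proof -
  have "(\<lambda>v. dist_code v (f ` E)) ` words n = (\<lambda>v. dist_code v (f ` E)) ` f ` words n"
    by (simp only: hamming_isometry_image[OF assms(1)])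
  also have "\<dots> = (\<lambda>v. dist_code (f v) (f ` E)) ` words n"
    by (simp add: image_image)
  also have "\<dots> = (\<lambda>v. dist_code v E) ` words n"
    using dist_code_isometry[OF assms] by simp
  finally show ?thesis by (simp add: covering_radius_def)
qed

lemma card_at_distance_isometry:
  assumes "hamming_isometry n f" "E \<subseteq> words n" "w \<in> words n"
  shows "card {c \<in> f ` E. hdist (f w) c = i} = card {c \<in> E. hdist w c = i}"
proof -
  have "hdist (f w) (f c) = hdist w c" if "c \<in> E" for c
    using assms that by (auto intro: hamming_isometry_hdist)
  then have "{c \<in> f ` E. hdist (f w) c = i} = f ` {c \<in> E. hdist w c = i}"
    by auto
  moreover have "inj_on f {c \<in> E. hdist w c = i}"
    by (rule inj_on_subset[OF hamming_isometry_inj_on[OF assms(1)]]) (use assms(2) in auto)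
  ultimately show ?thesis by (simp add: card_image)
qed

lemma completely_regular_isometry_iff:
  assumes "hamming_isometry n f" "E \<subseteq> words n"
  shows "completely_regular n (f ` E) \<longleftrightarrow> completely_regular n E"
proof -
  have onto: "\<And>x. x \<in> words n \<Longrightarrow> \<exists>x0\<in>words n. x = f x0"
    and into: "\<And>x. x \<in> words n \<Longrightarrow> f x \<in> words n"
    using hamming_isometry_image[OF assms(1)] by auto
  note dist = dist_code_isometry[OF assms] and count = card_at_distance_isometry[OF assms]
  show ?thesis
  proof
    assume reg: "completely_regular n (f ` E)"
    show "completely_regular n E"
      unfolding completely_regular_def
    proof (intro ballI impI allI)
      fix x y i assume xy: "x \<in> words n" "y \<in> words n" and "dist_code x E = dist_code y E"
      then have "dist_code (f x) (f ` E) = dist_code (f y) (f ` E)"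
        by (simp add: dist)
      then have "card {c \<in> f ` E. hdist (f x) c = i} = card {c \<in> f ` E. hdist (f y) c = i}"
        using reg into xy unfolding completely_regular_def by blast
      then show "card {c \<in> E. hdist x c = i} = card {c \<in> E. hdist y c = i}"
        by (simp add: count xy)
    qed
  next
    assume reg: "completely_regular n E"
    show "completely_regular n (f ` E)"
      unfolding completely_regular_def
    proof (intro ballI impI allI)
      fix x y i assume "x \<in> words n" "y \<in> words n"
        and d: "dist_code x (f ` E) = dist_code y (f ` E)"
      then obtain x0 y0 where xy0: "x0 \<in> words n" "y0 \<in> words n" and "x = f x0" "y = f y0"
        using onto by blast
      moreover have "dist_code x0 E = dist_code y0 E"
        using d dist xy0 \<open>x = f x0\<close> \<open>y = f y0\<close> by simp
      then have "card {c \<in> E. hdist x0 c = i} = card {c \<in> E. hdist y0 c = i}"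
        using reg xy0 unfolding completely_regular_def by blast
      ultimately show "card {c \<in> f ` E. hdist x c = i} = card {c \<in> f ` E. hdist y c = i}"
        by (simp add: count)
    qed
  qed
qed


definition permute_word :: "nat \<Rightarrow> (nat \<Rightarrow> nat) \<Rightarrow> 'a list \<Rightarrow> 'a list" where
  "permute_word n \<sigma> x = map (\<lambda>i. x ! \<sigma> i) [0..<n]"

lemma length_permute_word [simp]: "length (permute_word n \<sigma> x) = n"
  by (simp add: permute_word_def)

lemma nth_permute_word [simp]: "i < n \<Longrightarrow> permute_word n \<sigma> x ! i = x ! \<sigma> i"
  by (simp add: permute_word_def)

lemma permute_word_in_words [simp]: "permute_word n \<sigma> x \<in> words n"
  by (simp add: words_def)

lemma permute_code_eq_image: "permute_code n \<sigma> E = permute_word n \<sigma> ` E"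
  by (simp add: permute_code_def permute_word_def)

lemma permutes_lessThan_less: "\<sigma> permutes {..<n} \<Longrightarrow> \<sigma> i < n \<longleftrightarrow> i < n"
  using permutes_in_image by fastforce

lemma permute_word_id: "length x = n \<Longrightarrow> permute_word n id x = x"
  by (auto intro: nth_equalityI)

lemma permute_word_comp:
  "\<tau> permutes {..<n} \<Longrightarrow> permute_word n \<tau> (permute_word n \<sigma> x) = permute_word n (\<sigma> \<circ> \<tau>) x"
  by (auto simp: permutes_lessThan_less intro: nth_equalityI)

lemma permute_word_inv_permute_word:
  assumes "\<sigma> permutes {..<n}" "length x = n"
  shows "permute_word n (inv \<sigma>) (permute_word n \<sigma> x) = x"
proof -
  have "permute_word n (inv \<sigma>) (permute_word n \<sigma> x) = permute_word n (\<sigma> \<circ> inv \<sigma>) x"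
    by (rule permute_word_comp[OF permutes_inv[OF assms(1)]])
  then show ?thesis
    by (simp add: permutes_inv_o(1)[OF assms(1)] permute_word_id[OF assms(2)])
qed

lemma permute_word_permute_word_inv:
  assumes "\<sigma> permutes {..<n}" "length x = n"
  shows "permute_word n \<sigma> (permute_word n (inv \<sigma>) x) = x"
proof -
  have "permute_word n \<sigma> (permute_word n (inv \<sigma>) x) = permute_word n (inv \<sigma> \<circ> \<sigma>) x"
    by (rule permute_word_comp[OF assms(1)])
  then show ?thesis
    by (simp add: permutes_inv_o(2)[OF assms(1)] permute_word_id[OF assms(2)])
qed

lemma permute_word_id_image:
  assumes "E \<subseteq> words n"
  shows "permute_word n id ` E = E"
proof -
  have "permute_word n id ` E = (\<lambda>x. x) ` E"
    using assms by (intro image_cong) (auto simp: words_def permute_word_id)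
  then show ?thesis by simp
qed

lemma permute_word_image_comp:
  "\<tau> permutes {..<n} \<Longrightarrow>
    permute_word n \<tau> ` permute_word n \<sigma> ` E = permute_word n (\<sigma> \<circ> \<tau>) ` E"
  by (simp add: image_image permute_word_comp)

lemma permute_word_inv_image:
  assumes "\<sigma> permutes {..<n}" "E \<subseteq> words n"
  shows "permute_word n (inv \<sigma>) ` permute_word n \<sigma> ` E = E"
proof -
  have "permute_word n (inv \<sigma>) ` permute_word n \<sigma> ` E = (\<lambda>x. x) ` E"
    unfolding image_image
    using assms by (intro image_cong) (auto simp: words_def permute_word_inv_permute_word)
  then show ?thesis by simp
qed

lemma hdist_permute_word:
  assumes \<sigma>: "\<sigma> permutes {..<n}" and "length x = n" "length y = n"
  shows "hdist (permute_word n \<sigma> x) (permute_word n \<sigma> y) = hdist x y"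
proof -
  let ?A = "{i. i < n \<and> x ! \<sigma> i \<noteq> y ! \<sigma> i}"
  have "{j. j < n \<and> x ! j \<noteq> y ! j} = \<sigma> ` ?A"
  proof (intro set_eqI iffI)
    fix j assume "j \<in> {j. j < n \<and> x ! j \<noteq> y ! j}"
    then have "inv \<sigma> j \<in> ?A" and "j = \<sigma> (inv \<sigma> j)"
      using permutes_inverses(1)[OF \<sigma>] permutes_lessThan_less[OF permutes_inv[OF \<sigma>]] by auto
    then show "j \<in> \<sigma> ` ?A" by blast
  qed (auto simp: permutes_lessThan_less[OF \<sigma>])
  moreover have "inj_on \<sigma> ?A"
    using permutes_inj[OF \<sigma>] by (rule inj_on_subset) simp
  ultimately show ?thesis
    using assms(2,3) by (simp add: hdist_def card_image cong: conj_cong)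
qed

lemma permute_word_isometry:
  assumes \<sigma>: "\<sigma> permutes {..<n}"
  shows "hamming_isometry n (permute_word n \<sigma>)"
  unfolding hamming_isometry_def
proof (intro conjI ballI)
  show "permute_word n \<sigma> ` words n = words n"
  proof (intro subset_antisym subsetI)
    fix v assume "v \<in> words n"
    then have "length v = n" by (simp add: words_def)
    show "v \<in> permute_word n \<sigma> ` words n"
      by (rule image_eqI[where f = "permute_word n \<sigma>",
            OF permute_word_permute_word_inv[OF \<sigma> \<open>length v = n\<close>, symmetric]]) simp
  qed auto
qed (simp add: hdist_permute_word[OF \<sigma>] words_def)

lemma linear_code_permute_word:
  assumes \<sigma>: "\<sigma> permutes {..<n}" and lin: "linear_code n C"
  shows "linear_code n (permute_word n \<sigma> ` C)"
proof -
  have len: "length x = n" if "x \<in> C" for x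
    using lin that by (auto simp: linear_code_def words_def)
  have zero: "permute_word n \<sigma> (replicate n 0) = replicate n 0"
    and add: "\<And>x y. x \<in> C \<Longrightarrow> y \<in> C \<Longrightarrow>
      map2 (+) (permute_word n \<sigma> x) (permute_word n \<sigma> y) = permute_word n \<sigma> (map2 (+) x y)"
    and scale: "\<And>a x. x \<in> C \<Longrightarrow>
      map (\<lambda>u. a * u) (permute_word n \<sigma> x) = permute_word n \<sigma> (map (\<lambda>u. a * u) x)"
    by (auto simp: len permutes_lessThan_less[OF \<sigma>] intro!: nth_equalityI)
  show ?thesis
    using lin unfolding linear_code_def
  proof (elim conjE, intro conjI ballI allI)
    assume "replicate n 0 \<in> C"
    then show "replicate n 0 \<in> permute_word n \<sigma> ` C"
      by (rule image_eqI[where f="permute_word n \<sigma>", OF zero[symmetric]])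
  qed (auto simp: add scale words_def)
qed

section \<open>The repeated code\<close>

lemma rep_code_subset_words: "E \<subseteq> words m \<Longrightarrow> rep_code E \<subseteq> words (Suc m)"
  by (auto simp: rep_code_def)

lemma rep_code_eq_empty_iff [simp]: "rep_code E = {} \<longleftrightarrow> E = {}"
  by (auto simp: rep_code_def)

lemma dist_code_rep_code:
  fixes D :: "'a::finite list set"
  assumes "D \<subseteq> words m" "D \<noteq> {}" "w \<in> words m"
  shows "dist_code (a # w) (rep_code D) = dist_code w D"
proof -
  have fin: "finite D" "finite (rep_code D)"
    using assms(1) rep_code_subset_words[OF assms(1)] finite_words finite_subset by blast+
  have len: "length w = length x" if "x \<in> D" for x
    using assms(1,3) that by (auto simp: words_def)
  have "dist_code w D \<in> hdist w ` D"
    unfolding dist_code_def using fin(1) assms(2) by (intro Min_in) simp_all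
  then obtain x0 where x0: "x0 \<in> D" "hdist w x0 = dist_code w D"
    by auto
  have "Min (hdist (a # w) ` rep_code D) = dist_code w D"
  proof (rule Min_eqI)
    fix y assume "y \<in> hdist (a # w) ` rep_code D"
    then obtain b x where "x \<in> D" "y = hdist (a # w) (b # x)"
      by (auto simp: rep_code_def)
    moreover have "dist_code w D \<le> hdist w x"
      using fin(1) \<open>x \<in> D\<close> by (simp add: dist_code_def)
    ultimately show "dist_code w D \<le> y"
      using hdist_Cons[OF len] by simp
  next
    have "hdist (a # w) (a # x0) = dist_code w D"
      using hdist_Cons[OF len[OF x0(1)]] x0(2) by simp
    moreover have "a # x0 \<in> rep_code D"
      using x0(1) by (auto simp: rep_code_def)
    ultimately show "dist_code w D \<in> hdist (a # w) ` rep_code D"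
      by (metis image_eqI)
  qed (use fin in simp)
  then show ?thesis by (simp add: dist_code_def)
qed

lemma covering_radius_rep_code:
  fixes D :: "'a::finite list set"
  assumes "D \<subseteq> words m" "D \<noteq> {}"
  shows "covering_radius (Suc m) (rep_code D) = covering_radius m D"
proof -
  have "(\<lambda>v. dist_code v (rep_code D)) ` words (Suc m) = (\<lambda>w. dist_code w D) ` words m"
  proof (intro set_eqI iffI)
    fix r assume "r \<in> (\<lambda>v. dist_code v (rep_code D)) ` words (Suc m)"
    then obtain a w where "w \<in> words m" "r = dist_code (a # w) (rep_code D)"
      by (auto elim: words_SucE)
    then show "r \<in> (\<lambda>w. dist_code w D) ` words m"
      by (simp add: dist_code_rep_code[OF assms])
  next
    fix r assume "r \<in> (\<lambda>w. dist_code w D) ` words m"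
    then obtain w where w: "w \<in> words m" "r = dist_code w D" by blast
    then have "r = dist_code (undefined # w) (rep_code D)"
      by (simp add: dist_code_rep_code[OF assms])
    then show "r \<in> (\<lambda>v. dist_code v (rep_code D)) ` words (Suc m)"
      using w(1) by (metis Cons_in_words_Suc image_eqI)
  qed
  then show ?thesis by (simp add: covering_radius_def)
qed

lemma card_rep_code_at_distance:
  fixes D :: "'a::finite list set"
  assumes "D \<subseteq> words m" "w \<in> words m"
  shows "card {c \<in> rep_code D. hdist (a # w) c = i} =
    card {x \<in> D. hdist w x = i} +
    (card (UNIV :: 'a set) - 1) * card {x \<in> D. Suc (hdist w x) = i}"
proof -
  let ?F = "{x \<in> D. hdist w x = i}" and ?G = "{x \<in> D. Suc (hdist w x) = i}"
  have len: "length w = length x" if "x \<in> D" for x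
    using assms that by (auto simp: words_def)
  have "{c \<in> rep_code D. hdist (a # w) c = i} =
      case_prod Cons ` ({a} \<times> ?F \<union> (UNIV - {a}) \<times> ?G)"
  proof (intro set_eqI iffI)
    fix c assume "c \<in> {c \<in> rep_code D. hdist (a # w) c = i}"
    then obtain b x where "c = b # x" "x \<in> D" "hdist (a # w) (b # x) = i"
      by (auto simp: rep_code_def)
    then have "(b, x) \<in> {a} \<times> ?F \<union> (UNIV - {a}) \<times> ?G" and "c = case_prod Cons (b, x)"
      using hdist_Cons[OF len] by (auto split: if_splits)
    then show "c \<in> case_prod Cons ` ({a} \<times> ?F \<union> (UNIV - {a}) \<times> ?G)" by blast
  qed (auto simp: rep_code_def hdist_Cons len)
  moreover have "inj_on (case_prod Cons) ({a} \<times> ?F \<union> (UNIV - {a}) \<times> ?G)"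
    by (auto simp: inj_on_def)
  moreover have "card ({a} \<times> ?F \<union> (UNIV - {a}) \<times> ?G) =
      card ?F + (card (UNIV :: 'a set) - 1) * card ?G"
    using finite_subset[OF assms(1) finite_words]
    by (subst card_Un_disjoint) (auto simp: card_cartesian_product card_Diff_singleton)
  ultimately show ?thesis by (simp add: card_image)
qed

lemma completely_regular_rep_code_iff:
  fixes D :: "'a::finite list set"
  assumes "D \<subseteq> words m" "D \<noteq> {}"
  shows "completely_regular (Suc m) (rep_code D) \<longleftrightarrow> completely_regular m D"
proof
  assume reg: "completely_regular (Suc m) (rep_code D)"
  show "completely_regular m D"
    unfolding completely_regular_def
  proof (intro ballI impI allI)
    fix x y j assume xy: "x \<in> words m" "y \<in> words m" and "dist_code x D = dist_code y D"
    then have "dist_code (undefined # x) (rep_code D) = dist_code (undefined # y) (rep_code D)"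
      by (simp add: dist_code_rep_code[OF assms])
    then have "card {c \<in> rep_code D. hdist (undefined # x) c = i} =
        card {c \<in> rep_code D. hdist (undefined # y) c = i}" for i
      using reg xy unfolding completely_regular_def by simp
    then have count:
      "card {c \<in> D. hdist x c = i} + (card (UNIV :: 'a set) - 1) * card {c \<in> D. Suc (hdist x c) = i} =
       card {c \<in> D. hdist y c = i} + (card (UNIV :: 'a set) - 1) * card {c \<in> D. Suc (hdist y c) = i}"
      for i
      by (simp add: card_rep_code_at_distance[OF assms(1)] xy)
    show "card {c \<in> D. hdist x c = j} = card {c \<in> D. hdist y c = j}"
    proof (induction j)
      case 0
      then show ?case using count[of 0] by simp
    next
      case (Suc j)
      then show ?case using count[of "Suc j"] by simp
    qed
  qed
next
  assume reg: "completely_regular m D"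
  show "completely_regular (Suc m) (rep_code D)"
    unfolding completely_regular_def
  proof (intro ballI impI allI)
    fix v v' i assume "v \<in> words (Suc m)" "v' \<in> words (Suc m)"
      and d: "dist_code v (rep_code D) = dist_code v' (rep_code D)"
    then obtain a w a' w'
      where v: "v = a # w" "w \<in> words m" and v': "v' = a' # w'" "w' \<in> words m"
      by (metis words_SucE)
    then have "dist_code w D = dist_code w' D"
      using d by (simp add: dist_code_rep_code[OF assms])
    then have "card {c \<in> D. hdist w c = j} = card {c \<in> D. hdist w' c = j}" for j
      using reg v(2) v'(2) unfolding completely_regular_def by blast
    moreover have "card {c \<in> D. Suc (hdist w c) = i} = card {c \<in> D. Suc (hdist w' c) = i}"
      using calculation by (cases i) simp_all
    ultimately show "card {c \<in> rep_code D. hdist v c = i} = card {c \<in> rep_code D. hdist v' c = i}"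
      using v v' by (simp add: card_rep_code_at_distance[OF assms(1)])
  qed
qed

lemma rep_code_power_subset_words: "E \<subseteq> words m \<Longrightarrow> (rep_code ^^ k) E \<subseteq> words (m + k)"
  by (induction k) (auto dest: rep_code_subset_words)

lemma rep_code_power_eq_empty_iff [simp]: "(rep_code ^^ k) E = {} \<longleftrightarrow> E = {}"
  by (induction k) simp_all

lemma covering_radius_rep_code_power:
  fixes D :: "'a::finite list set"
  assumes "D \<subseteq> words m" "D \<noteq> {}"
  shows "covering_radius (m + k) ((rep_code ^^ k) D) = covering_radius m D"
  by (induction k)
    (simp_all add: covering_radius_rep_code rep_code_power_subset_words[OF assms(1)] assms(2))

lemma completely_regular_rep_code_power_iff:
  fixes D :: "'a::finite list set"
  assumes "D \<subseteq> words m" "D \<noteq> {}"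
  shows "completely_regular (m + k) ((rep_code ^^ k) D) \<longleftrightarrow> completely_regular m D"
  by (induction k)
    (simp_all add: completely_regular_rep_code_iff rep_code_power_subset_words[OF assms(1)] assms(2))

section \<open>Splitting off free coordinates\<close>

definition unit_word :: "nat \<Rightarrow> nat \<Rightarrow> 'a::zero_neq_one list" where
  "unit_word n i = map (\<lambda>j. if j = i then 1 else 0) [0..<n]"

lemma unit_word_Suc_0: "unit_word (Suc n) 0 = 1 # replicate n 0"
  by (rule nth_equalityI) (auto simp: unit_word_def nth_Cons simp del: upt_Suc split: nat.splits)

lemma permute_word_transpose_unit_word:
  assumes "i < n" "j < n"
  shows "permute_word n (Transposition.transpose i j) (unit_word n i) = unit_word n j"
  using assms by (auto simp: unit_word_def Transposition.transpose_def intro!: nth_equalityI)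

lemma min_dist_le_enatE:
  assumes "min_dist C \<le> enat d"
  obtains x y where "x \<in> C" "y \<in> C" "x \<noteq> y" "hdist x y \<le> d"
proof -
  have "Inf {enat (hdist x y) | x y. x \<in> C \<and> y \<in> C \<and> x \<noteq> y} < enat (Suc d)"
    using assms by (simp add: min_dist_def le_less_trans)
  then show thesis
    using that by (auto simp: Inf_less_iff)
qed

lemma hdist_le_1_differ_in_one:
  assumes "length x = length y" "x \<noteq> y" "hdist x y \<le> 1"
  obtains i where "i < length x" "x ! i \<noteq> y ! i"
    and "\<And>j. j < length x \<Longrightarrow> j \<noteq> i \<Longrightarrow> x ! j = y ! j"
proof -
  let ?S = "{i. i < length x \<and> x ! i \<noteq> y ! i}"
  have "?S \<noteq> {}"
    using assms(1,2) nth_equalityI by blast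
  moreover have "card ?S \<le> 1"
    using assms(3) by (simp add: hdist_def)
  ultimately obtain i where "?S = {i}"
    using card_le_Suc0_iff_eq[of ?S] by auto
  then show thesis
    using that by blast
qed

lemma linear_code_unit_word:
  fixes C :: "'a::field list set"
  assumes lin: "linear_code n C" and "min_dist C \<le> 1"
  obtains i where "i < n" "unit_word n i \<in> C"
proof -
  have add: "\<And>x y. x \<in> C \<Longrightarrow> y \<in> C \<Longrightarrow> map2 (+) x y \<in> C"
    and scale: "\<And>a x. x \<in> C \<Longrightarrow> map (\<lambda>u. a * u) x \<in> C"
    and len: "\<And>x. x \<in> C \<Longrightarrow> length x = n"
    using lin by (auto simp: linear_code_def words_def)
  obtain x y where xy: "x \<in> C" "y \<in> C" "x \<noteq> y" "hdist x y \<le> 1"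
    using assms(2) by (auto simp: one_enat_def elim: min_dist_le_enatE)
  moreover have "length x = length y"
    using len xy by simp
  ultimately obtain i where "i < length x" "x ! i \<noteq> y ! i"
    and "\<And>j. j < length x \<Longrightarrow> j \<noteq> i \<Longrightarrow> x ! j = y ! j"
    using hdist_le_1_differ_in_one by blast
  then have i: "i < n" "x ! i \<noteq> y ! i"
    and other: "\<And>j. j < n \<Longrightarrow> j \<noteq> i \<Longrightarrow> x ! j = y ! j"
    using len xy(1) by simp_all
  define e
    where "e = map (\<lambda>u. inverse (x ! i - y ! i) * u) (map2 (+) x (map (\<lambda>u. (-1) * u) y))"
  have "e \<in> C"
    unfolding e_def using xy by (intro scale add) auto
  moreover have "e = unit_word n i"
    using i other by (auto simp: e_def unit_word_def len xy intro!: nth_equalityI)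
  ultimately show thesis
    using that i(1) by blast
qed

lemma linear_code_tl_image:
  assumes lin: "linear_code (Suc n) C"
  shows "linear_code n (tl ` C)"
  unfolding linear_code_def
proof (intro conjI ballI allI)
  have Cons: "x = hd x # tl x" "tl x \<in> words n" if "x \<in> C" for x
    using linear_code_subset_words[OF lin] that by (auto elim!: words_SucE)
  then show "tl ` C \<subseteq> words n" by blast
  have "replicate (Suc n) 0 \<in> C"
    using lin by (simp add: linear_code_def)
  then show "replicate n 0 \<in> tl ` C"
    by (rule rev_image_eqI) simp
next
  fix u v assume "u \<in> tl ` C" "v \<in> tl ` C"
  then obtain x y where xy: "x \<in> C" "y \<in> C" "u = tl x" "v = tl y" by blast
  have "map2 (+) u v = tl (map2 (+) x y)"
    unfolding xy(3,4) by (cases x; cases y) simp_all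
  moreover have "map2 (+) x y \<in> C"
    using lin xy(1,2) by (simp add: linear_code_def)
  ultimately show "map2 (+) u v \<in> tl ` C" by blast
next
  fix a u assume "u \<in> tl ` C"
  then obtain x where x: "x \<in> C" "u = tl x" by blast
  then have "map (\<lambda>u. a * u) u = tl (map (\<lambda>u. a * u) x)"
    by (simp add: map_tl)
  moreover have "map (\<lambda>u. a * u) x \<in> C"
    using lin x(1) by (simp add: linear_code_def)
  ultimately show "map (\<lambda>u. a * u) u \<in> tl ` C" by blast
qed

lemma rep_code_tl_image:
  fixes C :: "'a::field list set"
  assumes lin: "linear_code (Suc n) C" and e: "1 # replicate n 0 \<in> C"
  shows "rep_code (tl ` C) = C"
proof (intro subset_antisym subsetI)
  fix c assume "c \<in> rep_code (tl ` C)"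
  then obtain b x where x: "x \<in> C" "c = b # tl x"
    by (auto simp: rep_code_def)
  then obtain a t where t: "x = a # t" "t \<in> words n"
    using lin by (auto simp: linear_code_def elim!: words_SucE)
  have "map (\<lambda>u. (b - a) * u) (1 # replicate n 0) \<in> C"
    using lin e unfolding linear_code_def by blast
  then have "map2 (+) x (map (\<lambda>u. (b - a) * u) (1 # replicate n 0)) \<in> C"
    using lin x(1) unfolding linear_code_def by blast
  moreover have "map2 (+) x (map (\<lambda>u. (b - a) * u) (1 # replicate n 0)) = c"
    using t x(2) by (auto simp: words_def intro: nth_equalityI)
  ultimately show "c \<in> C" by simp
next
  fix c assume "c \<in> C"
  then have "c = hd c # tl c"
    using linear_code_subset_words[OF lin] by (auto elim!: words_SucE)
  moreover have "tl c \<in> tl ` C"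
    using \<open>c \<in> C\<close> by blast
  ultimately show "c \<in> rep_code (tl ` C)"
    unfolding rep_code_def by blast
qed

definition shift_perm :: "(nat \<Rightarrow> nat) \<Rightarrow> nat \<Rightarrow> nat" where
  "shift_perm \<sigma> j = (case j of 0 \<Rightarrow> 0 | Suc j' \<Rightarrow> Suc (\<sigma> j'))"

lemma shift_perm_permutes:
  assumes \<sigma>: "\<sigma> permutes {..<n}"
  shows "shift_perm \<sigma> permutes {..<Suc n}"
  unfolding permutes_def
proof (intro conjI allI impI)
  fix x assume "x \<notin> {..<Suc n}"
  then show "shift_perm \<sigma> x = x"
    using permutes_not_in[OF \<sigma>] by (auto simp: shift_perm_def split: nat.splits)
next
  fix y
  have "shift_perm \<sigma> (shift_perm (inv \<sigma>) y) = y"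
    using permutes_inverses(1)[OF \<sigma>] by (simp add: shift_perm_def split: nat.splits)
  moreover have "x = shift_perm (inv \<sigma>) y" if "shift_perm \<sigma> x = y" for x
    using that permutes_inverses(2)[OF \<sigma>] by (auto simp: shift_perm_def split: nat.splits)
  ultimately show "\<exists>!x. shift_perm \<sigma> x = y" by blast
qed

lemma permute_word_shift_perm_Cons:
  "permute_word (Suc n) (shift_perm \<sigma>) (a # x) = a # permute_word n \<sigma> x"
  by (auto simp: shift_perm_def nth_Cons split: nat.splits intro!: nth_equalityI)

lemma rep_code_permute_word_image:
  "rep_code (permute_word n \<sigma> ` E) = permute_word (Suc n) (shift_perm \<sigma>) ` rep_code E"
proof -
  have "rep_code (permute_word n \<sigma> ` E) = {a # permute_word n \<sigma> x | a x. x \<in> E}"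
    by (auto simp: rep_code_def)
  also have "\<dots> = {permute_word (Suc n) (shift_perm \<sigma>) (a # x) | a x. x \<in> E}"
    by (simp only: permute_word_shift_perm_Cons)
  finally show ?thesis
    by (auto simp: rep_code_def)
qed

lemma rep_code_decomposition_refl:
  assumes "linear_code n C" "1 < min_dist C"
  shows "\<exists>D m k \<sigma>. linear_code m D \<and> 1 < min_dist D \<and> n = m + k \<and> \<sigma> permutes {..<n} \<and>
           C = permute_word n \<sigma> ` (rep_code ^^ k) D"
proof (intro exI conjI)
  show "C = permute_word n id ` (rep_code ^^ 0) C"
    by (simp only: funpow_0 permute_word_id_image[OF linear_code_subset_words[OF assms(1)]])
qed (simp_all add: assms permutes_id)

theorem linear_code_rep_code_decomposition:
  fixes C :: "'a::field list set"
  assumes "linear_code n C"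
  shows "\<exists>D m k \<sigma>. linear_code m D \<and> 1 < min_dist D \<and> n = m + k \<and> \<sigma> permutes {..<n} \<and>
           C = permute_word n \<sigma> ` (rep_code ^^ k) D"
  using assms
proof (induction n arbitrary: C)
  case 0
  have "1 < min_dist C"
  proof (rule ccontr)
    assume "\<not> 1 < min_dist C"
    then have "min_dist C \<le> 1" by simp
    then obtain i :: nat where "i < 0"
      by (rule linear_code_unit_word[OF "0.prems"])
    then show False by simp
  qed
  then show ?case
    by (rule rep_code_decomposition_refl[OF "0.prems"])
next
  case (Suc n)
  show ?case
  proof (cases "1 < min_dist C")
    case True
    then show ?thesis
      by (rule rep_code_decomposition_refl[OF Suc.prems])
  next
    case False
    then have "min_dist C \<le> 1" by simp
    then obtain i where i: "i < Suc n" "unit_word (Suc n) i \<in> C"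
      by (rule linear_code_unit_word[OF Suc.prems])
    define \<tau> where "\<tau> = Transposition.transpose i 0"
    define C' where "C' = permute_word (Suc n) \<tau> ` C"
    have \<tau>: "\<tau> permutes {..<Suc n}"
      using i(1) by (simp add: \<tau>_def permutes_swap_id)
    have lin': "linear_code (Suc n) C'"
      unfolding C'_def by (rule linear_code_permute_word[OF \<tau> Suc.prems])
    have "unit_word (Suc n) 0 \<in> C'"
      unfolding C'_def \<tau>_def
      by (rule image_eqI[where f = "permute_word (Suc n) _",
            OF permute_word_transpose_unit_word[OF i(1) zero_less_Suc, symmetric] i(2)])
    then have C': "C' = rep_code (tl ` C')"
      by (simp add: unit_word_Suc_0 rep_code_tl_image[OF lin'])
    obtain D m k \<sigma> where D: "linear_code m D" "1 < min_dist D" "n = m + k"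
      and \<sigma>: "\<sigma> permutes {..<n}" and tl: "tl ` C' = permute_word n \<sigma> ` (rep_code ^^ k) D"
      using Suc.IH[OF linear_code_tl_image[OF lin']] by blast
    have "C = permute_word (Suc n) (inv \<tau>) ` C'"
      unfolding C'_def
      by (rule permute_word_inv_image[OF \<tau> linear_code_subset_words[OF Suc.prems], symmetric])
    also have "C' = permute_word (Suc n) (shift_perm \<sigma>) ` (rep_code ^^ Suc k) D"
      by (subst C') (simp add: tl rep_code_permute_word_image)
    finally have "C = permute_word (Suc n) (shift_perm \<sigma> \<circ> inv \<tau>) ` (rep_code ^^ Suc k) D"
      by (simp add: permute_word_image_comp[OF permutes_inv[OF \<tau>]])
    moreover have "shift_perm \<sigma> \<circ> inv \<tau> permutes {..<Suc n}"
      by (rule permutes_compose[OF permutes_inv[OF \<tau>] shift_perm_permutes[OF \<sigma>]])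
    moreover have "Suc n = m + Suc k"
      using D(3) by simp
    ultimately show ?thesis
      using D(1,2) by blast
  qed
qed

theorem corollary2p4:
  fixes C :: "'a::{finite,field} list set" and n \<rho> :: nat
  assumes "linear_code n C"
    and "C \<noteq> words n"
    and "min_dist C = 1"
    and "covering_radius n C = \<rho>"
  shows "\<exists>(D :: 'a list set) m k \<sigma>.
           linear_code m D \<and> min_dist D > 1 \<and> covering_radius m D = \<rho> \<and>
           n = m + k \<and> \<sigma> permutes {..<n} \<and>
           C = permute_code n \<sigma> ((rep_code ^^ k) D) \<and>
           (completely_regular n C \<longleftrightarrow> completely_regular m D)"
proof -
  obtain D m k \<sigma> where D: "linear_code m D" "1 < min_dist D" and n: "n = m + k"
    and \<sigma>: "\<sigma> permutes {..<n}" and C: "C = permute_word n \<sigma> ` (rep_code ^^ k) D"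
    using linear_code_rep_code_decomposition[OF assms(1)] by blast
  have D_words: "D \<subseteq> words m" and "D \<noteq> {}"
    using D(1) by (auto simp: linear_code_def)
  have E_words: "(rep_code ^^ k) D \<subseteq> words n"
    using rep_code_power_subset_words[OF D_words] n by simp
  note iso = permute_word_isometry[OF \<sigma>]
  have "covering_radius m D = \<rho>"
    using assms(4) covering_radius_isometry[OF iso E_words]
      covering_radius_rep_code_power[OF D_words \<open>D \<noteq> {}\<close>] by (simp add: C n)
  moreover have "completely_regular n C \<longleftrightarrow> completely_regular m D"
    using completely_regular_isometry_iff[OF iso E_words]
      completely_regular_rep_code_power_iff[OF D_words \<open>D \<noteq> {}\<close>] by (simp add: C n)
  ultimately show ?thesis
    using D n \<sigma> C by (auto simp: permute_code_eq_image)
qed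

end
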